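(* Let $\mathbf C\in\mathbb R^{n\times n}$ and $\mathbf C_1,\dots,\mathbf C_m\in\mathbb R^{n\times n}$ be symmetric positive semidefinite matrices with $\sum_{i=1}^m\mathbf C_i=\mathbf C$. Then $$\sum_{i=1}^m\mathbf C_i\mathbf C^\dagger\mathbf C_i\preceq\mathbf C.$$
   Context: $\mathbf C^\dagger$ is the Moore–Penrose pseudoinverse; $\mathbf X\preceq\mathbf Y$ means $\mathbf Y-\mathbf X$ is positive semidefinite. *)

theory Defs
  imports "HOL-Analysis.Analysis"
begin

definition psd :: "real^'n^'n \<Rightarrow> bool" where
  "psd A \<longleftrightarrow> transpose A = A \<and> (\<forall>x. 0 \<le> x \<bullet> (A *v x))"

definition loewner_le :: "real^'n^'n \<Rightarrow> real^'n^'n \<Rightarrow> bool" where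
  "loewner_le X Y \<longleftrightarrow> psd (Y - X)"

definition moore_penrose :: "real^'n^'n \<Rightarrow> real^'n^'n \<Rightarrow> bool" where
  "moore_penrose A X \<longleftrightarrow> A ** X ** A = A \<and> X ** A ** X = X \<and>
     transpose (A ** X) = A ** X \<and> transpose (X ** A) = X ** A"

definition pinv :: "real^'n^'n \<Rightarrow> real^'n^'n" where
  "pinv A = (THE X. moore_penrose A X)"

end

theory Submission imports Defs begin

text \<open>Each summand satisfies \<open>C\<^sub>i \<preceq> C\<close>, and for any \<open>B\<close> with \<open>0 \<preceq> B \<preceq> C\<close> and any symmetric \<open>X\<close>
  with \<open>X C X = X\<close> (such as \<open>X = C\<^sup>\<dagger>\<close>) one has \<open>B X B \<preceq> B\<close>: expanding
  \<open>0 \<le> (x - w)\<^sup>T B (x - w)\<close> at \<open>w = X B x\<close> and bounding \<open>w\<^sup>T B w \<le> w\<^sup>T C w = (Bx)\<^sup>T X C X (Bx) = (Bx)\<^sup>T X (Bx)\<close>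
  gives \<open>x\<^sup>T B X B x \<le> x\<^sup>T B x\<close>.\<close>

lemma symmetric_matrix_inner:
  fixes A :: "real^'n^'n"
  assumes "transpose A = A"
  shows "(A *v x) \<bullet> y = x \<bullet> (A *v y)"
  by (metis assms dot_lmul_matrix transpose_matrix_vector)

lemma symmetric_matrix_if_inner:
  fixes A :: "real^'n^'n"
  assumes "\<And>x y. (A *v x) \<bullet> y = x \<bullet> (A *v y)"
  shows "transpose A = A"
proof -
  have "transpose A *v x = A *v x" for x
  proof -
    have "(transpose A *v x - A *v x) \<bullet> y = 0" for y
      by (simp add: inner_diff_left dot_lmul_matrix assms)
    from this[of "transpose A *v x - A *v x"] show ?thesis by simp
  qed
  then show ?thesis by (simp add: matrix_eq)
qed

lemma transpose_add: "transpose (A + B) = transpose A + transpose B"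
  by (simp add: transpose_def vec_eq_iff)

lemma transpose_diff: "transpose (A - B) = transpose A - transpose B"
  by (simp add: transpose_def vec_eq_iff)

lemma psd_add:
  assumes "psd A" "psd B"
  shows "psd (A + B)"
  using assms unfolding psd_def
  by (simp add: transpose_add matrix_vector_mult_add_rdistrib inner_add_right add_nonneg_nonneg)

lemma psd_sum:
  assumes "\<And>i. i \<in> I \<Longrightarrow> psd (A i)"
  shows "psd (sum A I)"
  using assms
proof (induction I rule: infinite_finite_induct)
  case (insert i I)
  then show ?case by (simp add: psd_add)
qed (simp_all add: psd_def transpose_def vec_eq_iff)

lemma loewner_le_sum:
  assumes "\<And>i. i \<in> I \<Longrightarrow> loewner_le (A i) (B i)"
  shows "loewner_le (sum A I) (sum B I)"
  using psd_sum[of I "\<lambda>i. B i - A i"] assms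
  by (simp add: loewner_le_def sum_subtractf)

lemma loewner_le_summand:
  assumes "finite I" "i \<in> I" "\<And>j. j \<in> I \<Longrightarrow> psd (A j)"
  shows "loewner_le (A i) (sum A I)"
  using psd_sum[of "I - {i}" A] assms
  by (simp add: loewner_le_def sum_diff1)

lemma loewner_le_sandwich:
  fixes B C X :: "real^'n^'n"
  assumes B: "psd B" and BC: "loewner_le B C"
    and X_sym: "transpose X = X" and XCX: "X ** C ** X = X"
  shows "loewner_le (B ** X ** B) B"
proof -
  have B_sym: "transpose B = B" using B by (simp add: psd_def)
  have B_form: "\<And>x. 0 \<le> x \<bullet> (B *v x)" using B by (simp add: psd_def)
  have B_le_C: "w \<bullet> (B *v w) \<le> w \<bullet> (C *v w)" for w
    using BC by (simp add: loewner_le_def psd_def matrix_vector_mult_diff_rdistrib inner_diff_right)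
  have form_le: "x \<bullet> ((B ** X ** B) *v x) \<le> x \<bullet> (B *v x)" for x
  proof -
    define u where "u = B *v x"
    define w where "w = X *v u"
    have Bxw: "x \<bullet> (B *v w) = u \<bullet> w"
      unfolding u_def by (simp add: symmetric_matrix_inner[OF B_sym])
    have Bwx: "w \<bullet> (B *v x) = u \<bullet> w"
      unfolding u_def by (simp add: inner_commute)
    have "w \<bullet> (C *v w) = u \<bullet> ((X ** C ** X) *v u)"
      unfolding w_def
      by (simp add: symmetric_matrix_inner[OF X_sym] flip: matrix_vector_mul_assoc)
    also have "\<dots> = u \<bullet> w" by (simp add: XCX w_def)
    finally have wCw: "w \<bullet> (C *v w) = u \<bullet> w" .
    have "0 \<le> (x - w) \<bullet> (B *v (x - w))" by (rule B_form)
    also have "\<dots> = x \<bullet> (B *v x) - x \<bullet> (B *v w) - w \<bullet> (B *v x) + w \<bullet> (B *v w)"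
      by (simp add: matrix_vector_mult_diff_distrib inner_diff_left inner_diff_right)
    also have "\<dots> \<le> x \<bullet> (B *v x) - u \<bullet> w"
      using B_le_C[of w] by (simp add: Bxw Bwx wCw)
    finally have "x \<bullet> (B *v w) \<le> x \<bullet> (B *v x)" by (simp add: Bxw)
    then show ?thesis by (simp add: u_def w_def flip: matrix_vector_mul_assoc)
  qed
  have "transpose (B ** X ** B) = B ** X ** B"
    by (simp add: matrix_transpose_mul B_sym X_sym matrix_mul_assoc)
  then show ?thesis
    using form_le B_sym
    by (simp add: loewner_le_def psd_def transpose_diff matrix_vector_mult_diff_rdistrib
        inner_diff_right)
qed

lemma symmetric_matrix_inverse_on_range:
  fixes C :: "real^'n^'n"
  assumes sym: "transpose C = C"
  obtains g where "Vector_Spaces.linear (*s) (*s) g" "\<And>x. g x \<in> range ((*v) C)"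
    "\<And>r. r \<in> range ((*v) C) \<Longrightarrow> g (C *v r) = r"
    "\<And>r. r \<in> range ((*v) C) \<Longrightarrow> C *v g r = r"
proof -
  define f where "f = (*v) C"
  define R where "R = range f"
  have lf: "Vector_Spaces.linear (*s) (*s) f"
    unfolding f_def by (rule matrix_vector_mul_linear_gen)
  have fs: "f x \<bullet> y = x \<bullet> f y" for x y
    unfolding f_def using symmetric_matrix_inner[OF sym] .
  have subR: "vec.subspace R"
    unfolding R_def by (simp add: lf vec.linear_subspace_image vec.subspace_UNIV)
  have span_R: "span R = R"
    unfolding R_def f_def by (metis span_linear_image span_UNIV matrix_vector_mul_linear)
  have inj: "inj_on f R"
  proof (subst vec.linear_inj_on_iff_eq_0[OF lf subR], intro ballI impI)
    fix x assume "x \<in> R" "f x = 0"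
    then obtain u where "x = f u" unfolding R_def by auto
    then have "x \<bullet> x = u \<bullet> f x" using fs by simp
    with \<open>f x = 0\<close> show "x = 0" by simp
  qed
  obtain g where g: "range g \<subseteq> R" "Vector_Spaces.linear (*s) (*s) g"
      "\<And>x. x \<in> R \<Longrightarrow> g (f x) = x"
    using vec.linear_inj_on_left_inverse[OF lf, of R] inj subR
    by (metis vec.span_eq_iff)
  have "f (g r) = r" if "r \<in> R" for r
  proof -
    from that obtain u where u: "r = f u" unfolding R_def by auto
    obtain y z where yz: "y \<in> span R" "\<And>w. w \<in> span R \<Longrightarrow> orthogonal z w" "u = y + z"
      using orthogonal_subspace_decomp_exists[of R u] by blast
    \<comment> \<open>the component of \<open>u\<close> orthogonal to the range lies in the kernel\<close>
    have "f z \<bullet> f z = z \<bullet> f (f z)" using fs by simp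
    also have "\<dots> = 0" using yz(2)[of "f (f z)"] span_R by (simp add: R_def orthogonal_def span_base)
    finally have "f z = 0" by simp
    then have "r = f y" using u yz(3) vec.linear_add[OF lf] by simp
    then show ?thesis using g(3) yz(1) span_R by simp
  qed
  then show ?thesis using that g unfolding R_def f_def by blast
qed

lemma moore_penrose_exists:
  fixes C :: "real^'n^'n"
  assumes sym: "transpose C = C"
  shows "\<exists>X. moore_penrose C X"
proof -
  obtain g where g_lin: "Vector_Spaces.linear (*s) (*s) g"
    and g_range: "\<And>x. g x \<in> range ((*v) C)"
    and g_left: "\<And>r. r \<in> range ((*v) C) \<Longrightarrow> g (C *v r) = r"
    and g_right: "\<And>r. r \<in> range ((*v) C) \<Longrightarrow> C *v g r = r"
    using symmetric_matrix_inverse_on_range[OF sym] by blast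
  have gC2: "g (C *v (C *v y)) = C *v y" for y by (simp add: g_left)
  have gC_ortho: "g (C *v x) \<bullet> y = g (C *v x) \<bullet> g (C *v y)" for x y
  proof -
    obtain u where u: "g (C *v x) = C *v u" using g_range by blast
    have "(C *v u) \<bullet> y = u \<bullet> (C *v g (C *v y))"
      by (simp add: symmetric_matrix_inner[OF sym] g_right)
    then show ?thesis by (simp add: u symmetric_matrix_inner[OF sym])
  qed
  \<comment> \<open>\<open>g \<circ> C\<close> is the orthogonal projection onto the range of \<open>C\<close>\<close>
  have gC_sym: "g (C *v x) \<bullet> y = x \<bullet> g (C *v y)" for x y
    using gC_ortho[of x y] gC_ortho[of y x] by (simp add: inner_commute)
  define X where "X = matrix (g \<circ> g \<circ> (*v) C)"
  have "Vector_Spaces.linear (*s) (*s) (g \<circ> g \<circ> (*v) C)"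
    using g_lin matrix_vector_mul_linear_gen by (blast intro: Vector_Spaces.linear_compose)
  then have Xv: "X *v y = g (g (C *v y))" for y
    unfolding X_def using matrix_works by simp
  have CX: "(C ** X) *v y = g (C *v y)" and XC: "(X ** C) *v y = g (C *v y)" for y
    by (simp_all add: Xv g_right g_range gC2 flip: matrix_vector_mul_assoc)
  have "C ** X ** C = C"
    by (simp add: matrix_eq Xv gC2 g_right flip: matrix_vector_mul_assoc)
  moreover have "X ** C ** X = X"
    by (simp add: matrix_eq Xv gC2 g_left g_range flip: matrix_vector_mul_assoc)
  moreover have "transpose (C ** X) = C ** X" "transpose (X ** C) = X ** C"
    by (rule symmetric_matrix_if_inner, simp add: CX XC gC_sym)+
  ultimately show ?thesis unfolding moore_penrose_def by blast
qed

lemma moore_penrose_unique: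
  fixes A X Y :: "real^'n^'n"
  assumes "moore_penrose A X" and "moore_penrose A Y"
  shows "X = Y"
proof -
  have x: "A ** X ** A = A" "X ** A ** X = X" "transpose (A ** X) = A ** X"
      "transpose (X ** A) = X ** A"
    and y: "A ** Y ** A = A" "Y ** A ** Y = Y" "transpose (A ** Y) = A ** Y"
      "transpose (Y ** A) = Y ** A"
    using assms unfolding moore_penrose_def by auto
  have tA_X: "transpose A = transpose A ** transpose X ** transpose A"
    and tA_Y: "transpose A = transpose A ** transpose Y ** transpose A"
    using x(1) y(1) by (metis matrix_transpose_mul matrix_mul_assoc)+
  have "X = X ** transpose X ** transpose A"
    using x(2,3) by (metis matrix_transpose_mul matrix_mul_assoc)
  also have "\<dots> = X ** transpose (A ** X) ** transpose (A ** Y)"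
    by (subst tA_Y) (simp add: matrix_transpose_mul matrix_mul_assoc)
  also have "\<dots> = X ** A ** Y" using x(2,3) y(3) by (simp add: matrix_mul_assoc)
  finally have eX: "X = X ** A ** Y" .
  have "Y = transpose A ** transpose Y ** Y"
    using y(2,4) by (metis matrix_transpose_mul)
  also have "\<dots> = transpose (X ** A) ** transpose (Y ** A) ** Y"
    by (subst tA_X) (simp add: matrix_transpose_mul matrix_mul_assoc)
  also have "\<dots> = X ** A ** (Y ** A ** Y)" using x(4) y(4) by (simp add: matrix_mul_assoc)
  also have "\<dots> = X ** A ** Y" using y(2) by simp
  finally show ?thesis using eX by simp
qed

lemma moore_penrose_pinv:
  fixes C :: "real^'n^'n"
  assumes "transpose C = C"
  shows "moore_penrose C (pinv C)"
  unfolding pinv_def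
  by (rule theI') (use moore_penrose_exists[OF assms] moore_penrose_unique in blast)

lemma pinv_symmetric:
  fixes C :: "real^'n^'n"
  assumes sym: "transpose C = C"
  shows "transpose (pinv C) = pinv C"
proof -
  have X: "moore_penrose C (pinv C)" by (rule moore_penrose_pinv[OF sym])
  then have "moore_penrose C (transpose (pinv C))"
    using sym unfolding moore_penrose_def
    by (metis matrix_transpose_mul matrix_mul_assoc transpose_transpose)
  then show ?thesis using moore_penrose_unique X by blast
qed

theorem lemma1:
  fixes C :: "real^'n^'n" and Cs :: "nat \<Rightarrow> real^'n^'n" and m :: nat
  assumes "psd C"
    and "\<And>i. i \<in> {1..m} \<Longrightarrow> psd (Cs i)"
    and "(\<Sum>i=1..m. Cs i) = C"
  shows "loewner_le (\<Sum>i=1..m. Cs i ** pinv C ** Cs i) C"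
proof -
  have sym: "transpose C = C" using assms(1) by (simp add: psd_def)
  have "pinv C ** C ** pinv C = pinv C"
    using moore_penrose_pinv[OF sym] by (simp add: moore_penrose_def)
  moreover have "loewner_le (Cs i) C" if "i \<in> {1..m}" for i
    using loewner_le_summand[of "{1..m}" i Cs] that assms(2,3) by simp
  ultimately have "loewner_le (Cs i ** pinv C ** Cs i) (Cs i)" if "i \<in> {1..m}" for i
    using loewner_le_sandwich assms(2) pinv_symmetric[OF sym] that by blast
  then have "loewner_le (\<Sum>i=1..m. Cs i ** pinv C ** Cs i) (\<Sum>i=1..m. Cs i)"
    by (rule loewner_le_sum)
  then show ?thesis using assms(3) by simp
qed

end
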